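(* Consider the algebra of Laurent polynomials in nonzero variables $a,b,c,d,e,f,g,h,i$ with the log-canonical Poisson bracket determined by $\{a,b\}=0,\ \{a,c\}=-\tfrac14 ac,\ \{a,d\}=-\tfrac14 ad,\ \{a,e\}=0,\ \{a,f\}=\tfrac14 af,\ \{a,g\}=-\tfrac14 ag,\ \{a,h\}=\tfrac14 ah,\ \{a,i\}=\tfrac14 ai,$ $\{b,c\}=\tfrac14 bc,\ \{b,d\}=0,\ \{b,e\}=\tfrac14 be,\ \{b,f\}=\tfrac14 bf,\ \{b,g\}=0,\ \{b,h\}=-\tfrac14 bh,\ \{b,i\}=0,$ $\{c,d\}=-\tfrac14 cd,\ \{c,e\}=\tfrac14 ce,\ \{c,f\}=-\tfrac14 cf,\ \{c,g\}=\{c,h\}=0,\ \{c,i\}=\tfrac14 ci,$ $\{d,e\}=-\tfrac14 de,\ \{d,f\}=\{d,g\}=\{d,h\}=0,\ \{d,i\}=\tfrac14 di,$ $\{e,f\}=-\tfrac14 ef,\ \{e,g\}=\{e,h\}=\{e,i\}=0,$ $\{f,g\}=-\tfrac14 fg,\ \{f,h\}=\tfrac14 fh,\ \{f,i\}=0,\ \{g,h\}=\tfrac14 gh,\ \{g,i\}=-\tfrac14 gi,\ \{h,i\}=0$. Then $bdeghi$ is a Casimir element, and it is the only Casimir (so the generic symplectic leaves are $8$-dimensional).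
   Context: A log-canonical bracket is extended from the generators to all Laurent polynomials by bilinearity, antisymmetry and the Leibniz rule. (These are the $\lambda$-lengths of a complete system of arcs on a Riemann sphere with one hole with six bordered cusps — the $PII^{JM}$ case.) *)

theory Defs
  imports "HOL-Library.Poly_Mapping"
begin

datatype var = A | B | C | D | E | F | G | H | I

text \<open>Laurent polynomials in a,...,i with coefficients in 'k:
  finitely supported maps from exponent vectors (var to int) to coefficients.\<close>
type_synonym 'k laurent = "(var \<Rightarrow>\<^sub>0 int) \<Rightarrow>\<^sub>0 'k"

definition lmono :: "(var \<Rightarrow>\<^sub>0 int) \<Rightarrow> 'k::zero_neq_one laurent" where
  "lmono m = Poly_Mapping.single m 1"

definition gen :: "var \<Rightarrow> 'k::zero_neq_one laurent" where
  "gen v = lmono (Poly_Mapping.single v 1)"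

definition gen_inv :: "var \<Rightarrow> 'k::zero_neq_one laurent" where
  "gen_inv v = lmono (Poly_Mapping.single v (-1))"

text \<open>Upper-triangular part of 4 * (log-canonical matrix): {x,y} = (omega4 x y / 4) x y,
  listed for pairs x before y in the order a,b,...,i.\<close>
fun omega_up :: "var \<Rightarrow> var \<Rightarrow> int" where
  "omega_up A B = 0" | "omega_up A C = -1" | "omega_up A D = -1" | "omega_up A E = 0"
| "omega_up A F = 1" | "omega_up A G = -1" | "omega_up A H = 1" | "omega_up A I = 1"
| "omega_up B C = 1" | "omega_up B D = 0" | "omega_up B E = 1" | "omega_up B F = 1"
| "omega_up B G = 0" | "omega_up B H = -1" | "omega_up B I = 0"
| "omega_up C D = -1" | "omega_up C E = 1" | "omega_up C F = -1" | "omega_up C G = 0"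
| "omega_up C H = 0" | "omega_up C I = 1"
| "omega_up D E = -1" | "omega_up D F = 0" | "omega_up D G = 0" | "omega_up D H = 0"
| "omega_up D I = 1"
| "omega_up E F = -1" | "omega_up E G = 0" | "omega_up E H = 0" | "omega_up E I = 0"
| "omega_up F G = -1" | "omega_up F H = 1" | "omega_up F I = 0"
| "omega_up G H = 1" | "omega_up G I = -1"
| "omega_up H I = 0"
| "omega_up _ _ = 0"

fun var_idx :: "var \<Rightarrow> nat" where
  "var_idx A = 0" | "var_idx B = 1" | "var_idx C = 2" | "var_idx D = 3" | "var_idx E = 4"
| "var_idx F = 5" | "var_idx G = 6" | "var_idx H = 7" | "var_idx I = 8"

definition omega4 :: "var \<Rightarrow> var \<Rightarrow> int" where
  "omega4 x y = (if var_idx x < var_idx y then omega_up x y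
                 else if var_idx y < var_idx x then - omega_up y x else 0)"

text \<open>Euler operator x_v d/dx_v: multiplies the coefficient of x^m by m_v.\<close>
definition euler :: "var \<Rightarrow> 'k::ring_1 laurent \<Rightarrow> 'k laurent" where
  "euler v P = Poly_Mapping.mapp (\<lambda>m c. of_int (Poly_Mapping.lookup m v) * c) P"

text \<open>The log-canonical bracket, extended to all Laurent polynomials by bilinearity,
  antisymmetry and the Leibniz rule:
  {P,Q} = sum_{x,y} (omega4 x y / 4) (x d_x P) (y d_y Q).\<close>
definition pbracket :: "'k::field laurent \<Rightarrow> 'k laurent \<Rightarrow> 'k laurent" where
  "pbracket P Q = (\<Sum>x\<in>UNIV. \<Sum>y\<in>UNIV.
      Poly_Mapping.single 0 (of_int (omega4 x y) / 4) * euler x P * euler y Q)"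

definition is_casimir :: "'k::field laurent \<Rightarrow> bool" where
  "is_casimir P \<longleftrightarrow> (\<forall>Q. pbracket P Q = 0)"

text \<open>Elements of the subalgebra generated by a unit u and its inverse w
  (Laurent polynomials in u).\<close>
definition laurent_poly_in :: "'k::comm_ring_1 laurent \<Rightarrow> 'k laurent \<Rightarrow> 'k laurent \<Rightarrow> bool" where
  "laurent_poly_in u w P \<longleftrightarrow> (\<exists>N (p::nat \<Rightarrow> 'k) (q::nat \<Rightarrow> 'k).
      P = (\<Sum>n<N. Poly_Mapping.single 0 (p n) * u ^ n + Poly_Mapping.single 0 (q n) * w ^ n))"

end

theory Submission imports Defs begin

text \<open>The bracket acts diagonally on Laurent monomials: the bracket of \<open>x\<^sup>m\<close> with a generator
  \<open>y\<close> is \<open>x\<^sup>m y\<close> times \<open>(\<Omega> m)\<^sub>y / 4\<close>, where \<open>\<Omega>\<close> is the matrix \<open>omega4\<close>. Hence \<open>P\<close> is a Casimir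
  iff every exponent vector of \<open>P\<close> lies in the kernel of \<open>\<Omega>\<close>. That kernel is spanned by the
  exponent vector \<open>(0,1,0,1,1,0,1,1,1)\<close> of \<open>bdeghi\<close>, so the Casimirs are exactly the Laurent
  polynomials in \<open>bdeghi\<close>.\<close>

lemma UNIV_var: "(UNIV :: var set) = {A, B, C, D, E, F, G, H, I}"
  by (auto intro: var.exhaust)

lemma finite_var [simp]: "finite (UNIV :: var set)"
  by (simp add: UNIV_var)

definition omega_kernel :: "(var \<Rightarrow>\<^sub>0 int) \<Rightarrow> bool" where
  "omega_kernel m \<longleftrightarrow> (\<forall>y. (\<Sum>x\<in>UNIV. omega4 x y * Poly_Mapping.lookup m x) = 0)"

definition cas_exponent :: "int \<Rightarrow> var \<Rightarrow>\<^sub>0 int" where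
  "cas_exponent k = Poly_Mapping.single B k + Poly_Mapping.single D k + Poly_Mapping.single E k
     + Poly_Mapping.single G k + Poly_Mapping.single H k + Poly_Mapping.single I k"

lemma lookup_cas_exponent:
  "Poly_Mapping.lookup (cas_exponent k) x = (if x \<in> {B, D, E, G, H, I} then k else 0)"
  by (cases x) (simp_all add: cas_exponent_def Poly_Mapping.lookup_add Poly_Mapping.lookup_single)

lemma cas_exponent_add: "cas_exponent (a + b) = cas_exponent a + cas_exponent b"
  by (rule poly_mapping_eqI) (simp add: Poly_Mapping.lookup_add lookup_cas_exponent)

lemma inj_cas_exponent: "inj cas_exponent"
  by (rule injI) (metis lookup_cas_exponent insertI1)

lemma omega_kernel_iff: "omega_kernel m \<longleftrightarrow> m \<in> range cas_exponent"
proof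
  assume "omega_kernel m"
  then have "(\<Sum>x\<in>UNIV. omega4 x y * Poly_Mapping.lookup m x) = 0" for y
    by (simp add: omega_kernel_def)
  note eqs = this[of A] this[of B] this[of C] this[of D] this[of E] this[of F] this[of G]
    this[of H] this[of I]
  let ?k = "Poly_Mapping.lookup m B"
  have "Poly_Mapping.lookup m x = Poly_Mapping.lookup (cas_exponent ?k) x" for x
    using eqs by (cases x) (simp_all add: UNIV_var omega4_def lookup_cas_exponent)
  then have "m = cas_exponent ?k"
    by (rule poly_mapping_eqI)
  then show "m \<in> range cas_exponent"
    by blast
next
  assume "m \<in> range cas_exponent"
  then obtain k where "m = cas_exponent k"
    by blast
  have "(\<Sum>x\<in>UNIV. omega4 x y * Poly_Mapping.lookup m x) = 0" for y
    by (cases y) (simp_all add: \<open>m = cas_exponent k\<close> UNIV_var omega4_def lookup_cas_exponent)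
  then show "omega_kernel m"
    by (simp add: omega_kernel_def)
qed

lemma lookup_const_mult:
  "Poly_Mapping.lookup (Poly_Mapping.single 0 c * (P :: 'k::comm_ring_1 laurent)) m
     = c * Poly_Mapping.lookup P m"
  by (simp add: lookup_mult Poly_Mapping.lookup_single when_mult mult_when)

lemma lookup_euler:
  "Poly_Mapping.lookup (euler v (P :: 'k::ring_1 laurent)) m
     = of_int (Poly_Mapping.lookup m v) * Poly_Mapping.lookup P m"
  by (simp add: euler_def lookup_mapp when_def Poly_Mapping.in_keys_iff)

lemma euler_gen: "euler x (gen y :: 'k::ring_1 laurent) = (if x = y then gen y else 0)"
  by (rule poly_mapping_eqI)
     (auto simp: lookup_euler gen_def lmono_def Poly_Mapping.lookup_single when_def)

definition bracket_gen_factor :: "var \<Rightarrow> 'k::field laurent \<Rightarrow> 'k laurent" where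
  "bracket_gen_factor y P =
     (\<Sum>x\<in>UNIV. Poly_Mapping.single 0 (of_int (omega4 x y) / 4) * euler x P)"

lemma lookup_bracket_gen_factor:
  "Poly_Mapping.lookup (bracket_gen_factor y P) m
     = of_int (\<Sum>x\<in>UNIV. omega4 x y * Poly_Mapping.lookup m x) / 4 * Poly_Mapping.lookup P m"
  by (simp add: bracket_gen_factor_def lookup_sum lookup_const_mult lookup_euler
      sum_distrib_right sum_divide_distrib mult.assoc)

lemma pbracket_eq_sum_bracket_gen_factor:
  "pbracket P Q = (\<Sum>y\<in>UNIV. bracket_gen_factor y P * euler y Q)"
  unfolding pbracket_def bracket_gen_factor_def
  by (subst sum.swap) (simp add: sum_distrib_right)

lemma pbracket_gen: "pbracket P (gen y) = bracket_gen_factor y P * gen y"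
  by (simp add: pbracket_eq_sum_bracket_gen_factor euler_gen if_distrib cong: if_cong)

lemma gen_mult_gen_inv: "(gen y :: 'k::comm_ring_1 laurent) * gen_inv y = 1"
proof -
  have "Poly_Mapping.single y (1::int) + Poly_Mapping.single y (-1) = 0"
    by (simp flip: Poly_Mapping.single_add)
  then show ?thesis
    by (simp add: gen_def gen_inv_def lmono_def mult_single)
qed

lemma is_casimir_iff_bracket_gen_factor_eq_0:
  "is_casimir P \<longleftrightarrow> (\<forall>y. bracket_gen_factor y P = 0)"
proof
  assume "is_casimir P"
  show "\<forall>y. bracket_gen_factor y P = 0"
  proof
    fix y
    have "bracket_gen_factor y P * gen y = 0"
      using \<open>is_casimir P\<close> by (simp add: is_casimir_def flip: pbracket_gen)
    then have "bracket_gen_factor y P * (gen y * gen_inv y) = 0"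
      by (simp only: mult.assoc [symmetric] mult_zero_left)
    then show "bracket_gen_factor y P = 0"
      by (simp add: gen_mult_gen_inv)
  qed
qed (simp add: is_casimir_def pbracket_eq_sum_bracket_gen_factor)

lemma is_casimir_iff_keys_omega_kernel:
  "is_casimir (P :: 'k::field_char_0 laurent) \<longleftrightarrow> (\<forall>m\<in>Poly_Mapping.keys P. omega_kernel m)"
proof -
  have "bracket_gen_factor y P = 0 \<longleftrightarrow>
      (\<forall>m\<in>Poly_Mapping.keys P. (\<Sum>x\<in>UNIV. omega4 x y * Poly_Mapping.lookup m x) = 0)" for y
    by (auto simp: poly_mapping_eq_iff fun_eq_iff lookup_bracket_gen_factor Poly_Mapping.in_keys_iff
        simp del: of_int_sum of_int_mult)
  then show ?thesis
    by (auto simp: is_casimir_iff_bracket_gen_factor_eq_0 omega_kernel_def)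
qed

lemma is_casimir_iff_keys_cas_exponent:
  "is_casimir (P :: 'k::field_char_0 laurent) \<longleftrightarrow> Poly_Mapping.keys P \<subseteq> range cas_exponent"
  by (auto simp: is_casimir_iff_keys_omega_kernel omega_kernel_iff)

lemma lmono_mult: "(lmono a :: 'k::comm_ring_1 laurent) * lmono b = lmono (a + b)"
  by (simp add: lmono_def mult_single)

lemma const_mult_lmono:
  "Poly_Mapping.single 0 c * (lmono m :: 'k::comm_ring_1 laurent) = Poly_Mapping.single m c"
  by (simp add: lmono_def mult_single)

lemma lmono_power_additive:
  fixes f :: "int \<Rightarrow> var \<Rightarrow>\<^sub>0 int"
  assumes add: "\<And>a b. f (a + b) = f a + f b"
  shows "(lmono (f k) :: 'k::comm_ring_1 laurent) ^ n = lmono (f (int n * k))"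
proof (induction n)
  case 0
  have "f 0 = 0"
    using add [of 0 0] by simp
  then show ?case
    by (simp add: lmono_def)
next
  case (Suc n)
  then show ?case
    by (simp add: lmono_mult add [symmetric] algebra_simps)
qed

lemma laurent_poly_in_lmono_imp_keys:
  fixes f :: "int \<Rightarrow> var \<Rightarrow>\<^sub>0 int"
  assumes add: "\<And>a b. f (a + b) = f a + f b"
    and "laurent_poly_in (lmono (f 1)) (lmono (f (-1))) (P :: 'k::comm_ring_1 laurent)"
  shows "Poly_Mapping.keys P \<subseteq> range f"
proof -
  obtain N p q where "P = (\<Sum>n<N. Poly_Mapping.single 0 (p n) * lmono (f 1) ^ n
      + Poly_Mapping.single 0 (q n) * lmono (f (-1)) ^ n)"
    using assms(2) unfolding laurent_poly_in_def by blast
  then have P: "P = (\<Sum>n<N. Poly_Mapping.single (f (int n)) (p n)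
      + Poly_Mapping.single (f (- int n)) (q n))"
    by (simp add: lmono_power_additive [OF add] const_mult_lmono)
  have "Poly_Mapping.keys (Poly_Mapping.single (f a) (x :: 'k) + Poly_Mapping.single (f b) y)
      \<subseteq> range f" for a b x y
    using Poly_Mapping.keys_add [of "Poly_Mapping.single (f a) x" "Poly_Mapping.single (f b) y"]
    by (auto split: if_splits)
  then show ?thesis
    unfolding P by (intro order.trans [OF keys_sum]) blast
qed

lemma keys_imp_laurent_poly_in_lmono:
  fixes f :: "int \<Rightarrow> var \<Rightarrow>\<^sub>0 int"
  assumes add: "\<And>a b. f (a + b) = f a + f b" and "inj f"
    and keys: "Poly_Mapping.keys (P :: 'k::comm_ring_1 laurent) \<subseteq> range f"
  shows "laurent_poly_in (lmono (f 1)) (lmono (f (-1))) P"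
proof -
  define N where "N = Suc (\<Sum>m\<in>Poly_Mapping.keys P. nat \<bar>inv f m\<bar>)"
  have bound: "nat \<bar>k\<bar> < N" if "f k \<in> Poly_Mapping.keys P" for k
    using member_le_sum [of "f k" "Poly_Mapping.keys P" "\<lambda>m. nat \<bar>inv f m\<bar>"] that \<open>inj f\<close>
    by (simp add: N_def)
  define p where "p n = Poly_Mapping.lookup P (f (int n))" for n
  define q where "q n = (if n = 0 then 0 else Poly_Mapping.lookup P (f (- int n)))" for n
  \<comment> \<open>\<open>q 0 = 0\<close> avoids counting the constant term twice\<close>
  have "P = (\<Sum>n<N. Poly_Mapping.single (f (int n)) (p n)
      + Poly_Mapping.single (f (- int n)) (q n))"
  proof (rule poly_mapping_eqI)
    fix m
    let ?t = "\<lambda>n. (if f (int n) = m then p n else 0) + (if f (- int n) = m then q n else 0)"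
    have "?t n = 0" if "m \<notin> Poly_Mapping.keys P" for n
      using that by (auto simp: p_def q_def Poly_Mapping.in_keys_iff)
    moreover have "?t n = (if n = nat \<bar>k\<bar> then Poly_Mapping.lookup P m else 0)"
      if "m = f k" for k n
      using \<open>inj f\<close> that by (cases "k \<ge> 0") (auto simp: p_def q_def inj_eq)
    ultimately have "Poly_Mapping.lookup P m = (\<Sum>n<N. ?t n)"
      using keys bound by (cases "m \<in> Poly_Mapping.keys P")
        (auto simp: Poly_Mapping.in_keys_iff)
    then show "Poly_Mapping.lookup P m = Poly_Mapping.lookup
        (\<Sum>n<N. Poly_Mapping.single (f (int n)) (p n) + Poly_Mapping.single (f (- int n)) (q n)) m"
      by (simp add: lookup_sum Poly_Mapping.lookup_add Poly_Mapping.lookup_single when_def)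
  qed
  then show ?thesis
    unfolding laurent_poly_in_def lmono_power_additive [OF add] const_mult_lmono by auto
qed

theorem mainTheorem7:
  fixes Cas Cas_inv :: "'k::field_char_0 laurent"
  defines "Cas \<equiv> gen B * gen D * gen E * gen G * gen H * gen I"
      and "Cas_inv \<equiv> gen_inv B * gen_inv D * gen_inv E * gen_inv G * gen_inv H * gen_inv I"
  shows "is_casimir Cas \<and> (\<forall>P::'k laurent. is_casimir P \<longleftrightarrow> laurent_poly_in Cas Cas_inv P)"
proof -
  have Cas: "Cas = lmono (cas_exponent 1)"
    unfolding Cas_def by (simp add: gen_def lmono_mult cas_exponent_def)
  have Cas_inv: "Cas_inv = lmono (cas_exponent (-1))"
    unfolding Cas_inv_def by (simp add: gen_inv_def lmono_mult cas_exponent_def)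
  have "is_casimir Cas"
    by (simp add: is_casimir_iff_keys_cas_exponent Cas lmono_def)
  moreover have "is_casimir P \<longleftrightarrow> laurent_poly_in Cas Cas_inv P" for P :: "'k laurent"
    unfolding is_casimir_iff_keys_cas_exponent Cas Cas_inv
    using laurent_poly_in_lmono_imp_keys keys_imp_laurent_poly_in_lmono
      cas_exponent_add inj_cas_exponent by blast
  ultimately show ?thesis
    by blast
qed

end
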